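(* For any Dyck path $\lambda\in\mathbf D_N$, \[ \prod_{\substack{1<i\le N\\ r_i(\lambda)=r_{i-1}(\lambda)+1}}\bigl(1+z\,t^{-r_i(\lambda)}\bigr)=\prod_{\substack{1<i\le N\\ c_i(\lambda)=c_{i-1}(\lambda)+1}}\bigl(1+z\,t^{-c_i(\lambda)}\bigr). \]
   Context: A Dyck path $\lambda\in\mathbf D_N$ is a lattice path of south and east unit steps from $(0,N)$ to $(N,0)$ lying weakly below the segment joining these points; the staircase path $\delta$ alternates south and east steps. $r_i(\lambda)$ is the number of lattice squares in the $i$-th row (rows numbered north to south) lying above $\lambda$ and below $\delta$; $c_i(\lambda)$ is the number of such squares in the $i$-th column, columns numbered from right to left (equivalently $c_i(\lambda)=r_i(\lambda^* )$ for the transposed path). $z,t$ are indeterminates. *)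

theory Defs
  imports Main
begin

(* Lattice paths from (0,N) to (N,0) encoded as step lists:
   True = south step, False = east step. *)

definition dyck :: "nat \<Rightarrow> bool list \<Rightarrow> bool" where
  "dyck N w \<longleftrightarrow> length w = 2 * N \<and> length (filter id w) = N \<and>
     (\<forall>k \<le> length w. length (filter Not (take k w)) \<le> length (filter id (take k w)))"
  (* the point after k steps is (#east, N - #south); weakly below the segment
     x + y = N  iff  #east <= #south *)

(* number of east steps taken before the i-th south step (i >= 1);
   this is the x-coordinate of the i-th south step of the path *)
fun east_before :: "bool list \<Rightarrow> nat \<Rightarrow> nat" where
  "east_before [] i = 0"
| "east_before (True # w) i = (if i \<le> 1 then 0 else east_before w (i - 1))"
| "east_before (False # w) i = Suc (east_before w i)"

(* r_i: number of unit squares [x,x+1] x [N-i,N-i+1] in row i (rows numbered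
   north to south) lying above the path (x >= x-coordinate of its i-th south
   step) and below the staircase delta = SESE...SE (x < i - 1) *)
definition row_area :: "bool list \<Rightarrow> nat \<Rightarrow> nat" where
  "row_area w i = card {x::nat. east_before w i \<le> x \<and> x < i - 1}"

(* transposed path (reflection in the line y = x) *)
definition transpose_path :: "bool list \<Rightarrow> bool list" where
  "transpose_path w = rev (map Not w)"

(* c_i: squares in the i-th column, columns numbered right to left *)
definition col_area :: "bool list \<Rightarrow> nat \<Rightarrow> nat" where
  "col_area w i = row_area (transpose_path w) i"

end

theory Submission
  imports Defs "HOL-Library.Multiset"
begin

(* The condition r_i = r_(i-1) + 1 says that the (i-1)-th and i-th south steps of the path are
   consecutive, and r_i is then the height #S - #E of the lattice point between them. So the
   left-hand product only depends on the multiset of heights of the points entered and left by a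
   south step; as transposition reverses the path and swaps the two kinds of steps, the right-hand
   product is the same expression in the heights of the points entered and left by an east step.
   These two multisets agree: at a level k > 0, the points entered by a south step correspond to
   the south steps arriving from level k - 1, the points left by an east step to the east steps
   going down to level k - 1, and a path from level 0 back to level 0 makes both kinds of crossing
   equally often; the peaks at level k are counted on both sides. *)

definition path_height :: "bool list \<Rightarrow> int" where
  "path_height w = int (length (filter id w)) - int (length (filter Not w))"

lemma path_height_Cons: "path_height (a # w) = path_height w + (if a then 1 else -1)"
  by (cases a) (auto simp: path_height_def)

lemma path_height_snoc: "path_height (w @ [a]) = path_height w + (if a then 1 else -1)"
  by (cases a) (auto simp: path_height_def)

lemma path_height_transpose_path: "path_height (transpose_path w) = - path_height w"
  by (induction w) (auto simp: path_height_def transpose_path_def)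

(* The heights of the points of w entered and left by a south step (ss_levels), resp. by an east
   step (ee_levels). *)
fun ss_levels :: "bool list \<Rightarrow> int multiset" where
  "ss_levels [] = {#}"
| "ss_levels (a # w) = image_mset (\<lambda>x. if a then x + 1 else x - 1) (ss_levels w)
     + (if a \<and> w \<noteq> [] \<and> hd w then {#1#} else {#})"

fun ee_levels :: "bool list \<Rightarrow> int multiset" where
  "ee_levels [] = {#}"
| "ee_levels (a # w) = image_mset (\<lambda>x. if a then x + 1 else x - 1) (ee_levels w)
     + (if \<not> a \<and> w \<noteq> [] \<and> \<not> hd w then {#-1#} else {#})"

lemma ss_levels_snoc:
  "ss_levels (w @ [a])
     = ss_levels w + (if w \<noteq> [] \<and> last w \<and> a then {#path_height w#} else {#})"
  by (induction w) (auto simp: path_height_Cons path_height_def)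

lemma ee_levels_snoc:
  "ee_levels (w @ [a])
     = ee_levels w + (if w \<noteq> [] \<and> \<not> last w \<and> \<not> a then {#path_height w#} else {#})"
  by (induction w) (auto simp: path_height_Cons path_height_def)

lemma ss_levels_transpose_path:
  "ss_levels (transpose_path w) = image_mset (\<lambda>x. x - path_height w) (ee_levels w)"
proof (induction w)
  case Nil
  then show ?case by (simp add: transpose_path_def)
next
  case (Cons a w)
  have "transpose_path (a # w) = transpose_path w @ [\<not> a]"
    by (simp add: transpose_path_def)
  moreover have "w \<noteq> [] \<Longrightarrow> last (transpose_path w) = (\<not> hd w)"
    by (cases w) (auto simp: transpose_path_def)
  moreover have "transpose_path w = [] \<longleftrightarrow> w = []"
    by (simp add: transpose_path_def)
  ultimately show ?case
    using Cons.IH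
    by (cases a) (auto simp: ss_levels_snoc path_height_transpose_path path_height_Cons
        multiset.map_comp o_def)
qed

(* The of_bool terms are the corrections for the first and the last point of w. *)
lemma count_ss_levels_ee_levels:
  assumes "w \<noteq> []" and "hd w"
  shows "count (ss_levels w) k + of_bool (k \<le> 0)
       = count (ee_levels w) k + of_bool (k \<le> path_height w - of_bool (last w))"
  using assms
proof (induction w rule: rev_induct)
  case Nil
  then show ?case by simp
next
  case (snoc a w)
  show ?case
  proof (cases "w = []")
    case True
    with snoc.prems show ?thesis by (simp add: path_height_def)
  next
    case False
    with snoc have IH: "count (ss_levels w) k + of_bool (k \<le> 0)
       = count (ee_levels w) k + of_bool (k \<le> path_height w - of_bool (last w))"
      by simp
    from False show ?thesis
      using IH by (cases a; cases "last w") (auto simp: ss_levels_snoc ee_levels_snoc path_height_snoc)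
  qed
qed

definition south_rises :: "bool list \<Rightarrow> nat set" where
  "south_rises w =
     {i. 1 < i \<and> i \<le> length (filter id w) \<and> east_before w i = east_before w (i - 1)}"

lemma finite_south_rises: "finite (south_rises w)"
  by (rule finite_subset[of _ "{..length (filter id w)}"]) (auto simp: south_rises_def)

lemma south_rises_gt_1: "i \<in> south_rises w \<Longrightarrow> 1 < i"
  by (simp add: south_rises_def)

lemma south_rises_Nil: "south_rises [] = {}"
  by (auto simp: south_rises_def)

lemma south_rises_Cons_east: "south_rises (False # w) = south_rises w"
  by (simp add: south_rises_def)

lemma south_rises_Cons_south:
  "south_rises (True # w) = (if w \<noteq> [] \<and> hd w then {2} else {}) \<union> Suc ` south_rises w"
proof (rule set_eqI)
  fix i
  consider "i \<le> 1" | "i = 2" | j where "i = Suc j" "2 \<le> j"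
    by (cases i) (auto simp: not_le le_Suc_eq, fastforce)
  then show "i \<in> south_rises (True # w)
      \<longleftrightarrow> i \<in> (if w \<noteq> [] \<and> hd w then {2} else {}) \<union> Suc ` south_rises w"
  proof cases
    case 1
    then show ?thesis by (auto simp: south_rises_def)
  next
    case 2
    have "east_before w 1 = 0 \<longleftrightarrow> w = [] \<or> hd w"
      by (cases w; cases "hd w") auto
    moreover have "w \<noteq> [] \<Longrightarrow> hd w \<Longrightarrow> 1 \<le> length (filter id w)"
      by (cases w) auto
    ultimately have "2 \<in> south_rises (True # w) \<longleftrightarrow> w \<noteq> [] \<and> hd w"
      by (auto simp: south_rises_def)
    moreover have "2 \<notin> Suc ` south_rises w"
      using south_rises_gt_1[of 1 w] by auto
    ultimately show ?thesis
      using 2 by simp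
  next
    case 3
    then show ?thesis by (auto simp: south_rises_def)
  qed
qed

lemma ss_levels_south_rises:
  "ss_levels w = image_mset (\<lambda>i. int (i - 1) - int (east_before w i)) (mset_set (south_rises w))"
proof (induction w)
  case Nil
  then show ?case by (simp add: south_rises_Nil)
next
  case (Cons a w)
  show ?case
  proof (cases a)
    case False
    then show ?thesis
      using Cons.IH by (simp add: south_rises_Cons_east multiset.map_comp o_def algebra_simps)
  next
    case True
    have "2 \<notin> Suc ` south_rises w"
      using south_rises_gt_1[of 1 w] by auto
    then have rises: "mset_set (south_rises (True # w))
        = (if w \<noteq> [] \<and> hd w then {#2#} else {#}) + image_mset Suc (mset_set (south_rises w))"
      using finite_south_rises[of w]
      by (simp add: south_rises_Cons_south image_mset_mset_set)
    have "hd w \<Longrightarrow> east_before w 1 = 0"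
      by (cases w) auto
    then have "image_mset (\<lambda>i. int (i - 1) - int (east_before (True # w) i))
        (mset_set (south_rises (True # w)))
        = (if w \<noteq> [] \<and> hd w then {#1#} else {#}) + image_mset (\<lambda>x. x + 1) (ss_levels w)"
      unfolding rises Cons.IH
      by (auto simp: multiset.map_comp o_def finite_south_rises south_rises_Nil
          dest: south_rises_gt_1 intro!: image_mset_cong)
    moreover have "ss_levels (True # w)
        = (if w \<noteq> [] \<and> hd w then {#1#} else {#}) + image_mset (\<lambda>x. x + 1) (ss_levels w)"
      by (simp add: add.commute)
    ultimately show ?thesis
      using True by simp
  qed
qed

lemma east_before_prefix:
  assumes "1 \<le> i" and "i \<le> length (filter id w)"
  shows "\<exists>k \<le> length w. length (filter id (take k w)) = i - 1
           \<and> length (filter Not (take k w)) = east_before w i"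
  using assms
proof (induction w arbitrary: i)
  case Nil
  then show ?case by simp
next
  case (Cons a w)
  consider "a" "i = 1" | "a" "1 < i" | "\<not> a"
    using Cons.prems by linarith
  then show ?case
  proof cases
    case 1
    then show ?thesis by (intro exI[of _ 0]) auto
  next
    case 2
    with Cons.prems Cons.IH[of "i - 1"] have "\<exists>k \<le> length w.
        length (filter id (take k w)) = i - 1 - 1 \<and> length (filter Not (take k w)) = east_before w (i - 1)"
      by (auto simp: id_def)
    then obtain k where "k \<le> length w"
      "length (filter id (take k w)) = i - 1 - 1" "length (filter Not (take k w)) = east_before w (i - 1)"
      by blast
    with 2 show ?thesis by (intro exI[of _ "Suc k"]) (auto simp: id_def)
  next
    case 3
    with Cons.prems Cons.IH[of i] have "\<exists>k \<le> length w.
        length (filter id (take k w)) = i - 1 \<and> length (filter Not (take k w)) = east_before w i"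
      by (auto simp: id_def)
    then obtain k where "k \<le> length w"
      "length (filter id (take k w)) = i - 1" "length (filter Not (take k w)) = east_before w i"
      by blast
    with 3 show ?thesis by (intro exI[of _ "Suc k"]) (auto simp: id_def)
  qed
qed

lemma row_area_eq: "row_area w i = (i - 1) - east_before w i"
proof -
  have "{x. east_before w i \<le> x \<and> x < i - 1} = {east_before w i..<i - 1}" by auto
  then show ?thesis unfolding row_area_def by simp
qed

lemma length_filter_id_Not: "length (filter id w) + length (filter Not w) = length w"
  by (induction w) auto

lemma dyck_path_height: "dyck N w \<Longrightarrow> path_height w = 0"
  using length_filter_id_Not[of w] by (simp add: dyck_def path_height_def)

lemma dyck_hd: "dyck N w \<Longrightarrow> w \<noteq> [] \<Longrightarrow> hd w"
  unfolding dyck_def by (cases w) (auto split: if_splits dest!: spec[of _ 1])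

lemma dyck_last:
  assumes "dyck N w" and "w \<noteq> []"
  shows "\<not> last w"
proof
  assume "last w"
  then have "w = butlast w @ [True]"
    using assms(2) by (metis append_butlast_last_id)
  moreover have "length (filter Not (butlast w)) \<le> length (filter id (butlast w))"
    using assms(1) unfolding dyck_def butlast_conv_take by simp
  moreover have "length (filter id w) = length (filter Not w)"
    using assms(1) length_filter_id_Not[of w] by (simp add: dyck_def)
  ultimately show False
    by (metis Suc_n_not_le_n filter.simps id_apply append_Nil2 filter_append length_append_singleton)
qed

lemma length_filter_transpose_path:
  "length (filter id (transpose_path w)) = length (filter Not w)"
  "length (filter Not (transpose_path w)) = length (filter id w)"
  by (induction w) (auto simp: transpose_path_def)

lemma take_transpose_path: "take k (transpose_path w) = transpose_path (drop (length w - k) w)"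
  by (simp add: transpose_path_def take_rev take_map drop_map)

lemma dyck_transpose_path:
  assumes "dyck N w"
  shows "dyck N (transpose_path w)"
  unfolding dyck_def
proof (intro conjI allI impI)
  have len: "length w = 2 * N" "length (filter id w) = N"
    using assms by (auto simp: dyck_def)
  then show "length (transpose_path w) = 2 * N" "length (filter id (transpose_path w)) = N"
    using length_filter_id_Not[of w]
    by (simp_all add: length_filter_transpose_path) (simp add: transpose_path_def)
  fix k
  define m where "m = length w - k"
  have split: "length (filter P (take m w)) + length (filter P (drop m w)) = length (filter P w)" for P
    by (metis append_take_drop_id filter_append length_append)
  have "length (filter Not (take m w)) \<le> length (filter id (take m w))"
    using assms by (simp add: dyck_def m_def)
  moreover have "length (filter Not w) = N"
    using len length_filter_id_Not[of w] by simp
  moreover have "take k (transpose_path w) = transpose_path (drop m w)"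
    by (simp add: take_transpose_path m_def)
  ultimately show "length (filter Not (take k (transpose_path w)))
      \<le> length (filter id (take k (transpose_path w)))"
    using len split[of id] split[of Not] by (simp add: length_filter_transpose_path)
qed

lemma dyck_east_before_le:
  assumes "dyck N w" and "1 \<le> i" and "i \<le> N"
  shows "east_before w i \<le> i - 1"
  using assms east_before_prefix[of i w] unfolding dyck_def by force

lemma dyck_ss_levels_eq_ee_levels:
  assumes "dyck N w"
  shows "ss_levels w = ee_levels w"
proof (cases "w = []")
  case False
  show ?thesis
  proof (rule multiset_eqI)
    fix k
    show "count (ss_levels w) k = count (ee_levels w) k"
      using count_ss_levels_ee_levels[OF False dyck_hd[OF assms False], of k]
      by (simp add: dyck_last[OF assms False] dyck_path_height[OF assms])
  qed
qed simp

lemma dyck_ss_levels_transpose_path: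
  "dyck N w \<Longrightarrow> ss_levels (transpose_path w) = ss_levels w"
  by (simp add: ss_levels_transpose_path dyck_path_height dyck_ss_levels_eq_ee_levels)

lemma prod_row_rises_eq_prod_ss_levels:
  fixes f :: "int \<Rightarrow> 'a :: comm_monoid_mult"
  assumes "dyck N w"
  shows "(\<Prod>i\<in>{i. 1 < i \<and> i \<le> N \<and> row_area w i = row_area w (i - 1) + 1}.
            f (int (row_area w i)))
       = (\<Prod>k\<in>#ss_levels w. f k)"
proof -
  have N: "length (filter id w) = N"
    using assms by (simp add: dyck_def)
  have row_area_int: "int (row_area w i) = int (i - 1) - int (east_before w i)"
    if "1 \<le> i" "i \<le> N" for i
    using dyck_east_before_le[OF assms that] by (simp add: row_area_eq)
  have "row_area w i = row_area w (i - 1) + 1 \<longleftrightarrow> east_before w i = east_before w (i - 1)"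
    if "1 < i" "i \<le> N" for i
  proof -
    have "int (row_area w i) = int (i - 1) - int (east_before w i)"
      "int (row_area w (i - 1)) = int (i - 1) - 1 - int (east_before w (i - 1))"
      using row_area_int[of i] row_area_int[of "i - 1"] that by auto
    then show ?thesis by linarith
  qed
  then have "{i. 1 < i \<and> i \<le> N \<and> row_area w i = row_area w (i - 1) + 1} = south_rises w"
    by (auto simp: south_rises_def N)
  then have "(\<Prod>i\<in>{i. 1 < i \<and> i \<le> N \<and> row_area w i = row_area w (i - 1) + 1}.
            f (int (row_area w i)))
      = (\<Prod>i\<in>south_rises w. f (int (i - 1) - int (east_before w i)))"
    by (auto simp: south_rises_def N row_area_int intro!: prod.cong)
  also have "\<dots> = (\<Prod>k\<in>#ss_levels w. f k)"
    by (simp add: ss_levels_south_rises prod_unfold_prod_mset multiset.map_comp o_def)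
  finally show ?thesis .
qed

theorem lemma2p2p4:
  fixes N :: nat and lam :: "bool list" and z t :: "'a :: field"
  assumes "dyck N lam" and "t \<noteq> 0"
  shows "(\<Prod>i\<in>{i. 1 < i \<and> i \<le> N \<and> row_area lam i = row_area lam (i - 1) + 1}.
            1 + z * t powi (- int (row_area lam i)))
       = (\<Prod>i\<in>{i. 1 < i \<and> i \<le> N \<and> col_area lam i = col_area lam (i - 1) + 1}.
            1 + z * t powi (- int (col_area lam i)))"
proof -
  let ?f = "\<lambda>k. 1 + z * t powi (- k)"
  have "(\<Prod>i\<in>{i. 1 < i \<and> i \<le> N \<and> row_area lam i = row_area lam (i - 1) + 1}.
            1 + z * t powi (- int (row_area lam i))) = (\<Prod>k\<in>#ss_levels lam. ?f k)"
    using prod_row_rises_eq_prod_ss_levels[OF assms(1), of ?f] by simp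
  also have "\<dots> = (\<Prod>k\<in>#ss_levels (transpose_path lam). ?f k)"
    by (simp add: dyck_ss_levels_transpose_path[OF assms(1)])
  also have "\<dots> = (\<Prod>i\<in>{i. 1 < i \<and> i \<le> N \<and> col_area lam i = col_area lam (i - 1) + 1}.
            1 + z * t powi (- int (col_area lam i)))"
    using prod_row_rises_eq_prod_ss_levels[OF dyck_transpose_path[OF assms(1)], of ?f]
    by (simp add: col_area_def)
  finally show ?thesis .
qed

end
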